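(* Let $p$ be a prime number and let $x,y,z\in\mathbb{N}$ with $x\le y\le z$ satisfy $\frac{4}{p}=\frac{1}{x}+\frac{1}{y}+\frac{1}{z}$. Let $d=\gcd(x,y,z)$, $a=\gcd(x,y)/d$, $b=\gcd(x,z)/d$, $c=\gcd(y,z)/d$, and let $x^{\circ},y^{\circ},z^{\circ}$ be the positive integers with $x=x^{\circ}abd$, $y=y^{\circ}acd$, $z=z^{\circ}bcd$. (i) If the solution is of Type I, i.e. $\gcd(x,p)=1$, $\gcd(y,p)=1$ and $\gcd(z,p)=p$, then $x^{\circ}=y^{\circ}=1$ and $z^{\circ}=p$. (ii) If the solution is of Type II, i.e. $\gcd(x,p)=1$, $\gcd(y,p)=p$ and $\gcd(z,p)=p$, then $x^{\circ}=y^{\circ}=z^{\circ}=1$.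
   Context: $\mathbb{N}$ denotes the positive integers. The quantities $x^{\circ},y^{\circ},z^{\circ}$ are well-defined positive integers since $abd\mid x$, $acd\mid y$, $bcd\mid z$ ($a,b,c$ are pairwise coprime). *)

theory Defs
  imports Complex_Main "HOL-Computational_Algebra.Primes"
begin

end

theory Submission
  imports Defs
begin

text \<open>
  Writing \<open>x = x0 a b d\<close>, \<open>y = y0 a c d\<close>, \<open>z = z0 b c d\<close>, maximality of the gcds makes
  \<open>x0 b, y0 c\<close>, \<open>x0 a, z0 c\<close> and \<open>y0 a, z0 b\<close> coprime pairs, and clearing denominators gives
  \<open>4 x0 y0 z0 a b c d = p (x0 y0 a + y0 z0 c + x0 z0 b)\<close>.
  So each cofactor divides \<open>p\<close> times a number coprime to it and lies in \<open>{1, p}\<close>; which one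
  equals \<open>p\<close> is read off from which of \<open>x, y, z\<close> the prime divides. In Type II, \<open>p\<close> must
  divide \<open>c\<close> (as \<open>y0, z0\<close> are coprime), and then the reduced equation divided by \<open>p\<close>
  forces \<open>p\<close> to divide \<open>a\<close> or \<open>b\<close> unless \<open>y0 = z0 = 1\<close>.
\<close>

lemma coprime_if_gcd_mult_eq:
  fixes g u v :: nat
  assumes "gcd (g * u) (g * v) = g" and "0 < g"
  shows "coprime u v"
proof -
  have "g * gcd u v = g * 1"
    using assms(1) by (simp add: gcd_mult_distrib_nat)
  then show ?thesis
    using assms(2) by (simp add: coprime_iff_gcd_eq_1)
qed

lemma eq_1_or_prime_if_dvd_prime_mult:
  fixes p u s w k :: nat
  assumes "prime p" and "p * (u * s + w) = u * k" and "coprime u w"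
  shows "u = 1 \<or> u = p"
proof -
  have "p * w + (p * s) * u = u * k"
    using assms(2) by (simp add: algebra_simps)
  then have "u dvd p * w"
    by (metis dvd_add_times_triv_right_iff dvd_triv_left)
  then have "u dvd p"
    using assms(3) by (simp add: coprime_dvd_mult_left_iff)
  then show ?thesis
    using assms(1) by (simp add: prime_nat_iff)
qed

lemma gcd_prime_eq_1_iff:
  fixes p n :: nat
  assumes "prime p"
  shows "gcd n p = 1 \<longleftrightarrow> \<not> p dvd n"
proof
  assume "gcd n p = 1"
  then show "\<not> p dvd n"
    using assms by (auto simp: gcd_proj2_iff)
next
  assume "\<not> p dvd n"
  then show "gcd n p = 1"
    using prime_imp_coprime[OF assms] by (simp add: coprime_commute)
qed

lemma unit_fractions_eq_iff:
  fixes m n x y z :: nat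
  assumes "0 < n" and "0 < x" and "0 < y" and "0 < z"
  shows "real m / real n = 1 / real x + 1 / real y + 1 / real z
     \<longleftrightarrow> m * x * y * z = n * (x * y + y * z + x * z)"
proof -
  have "real m / real n = 1 / real x + 1 / real y + 1 / real z
      \<longleftrightarrow> real (m * x * y * z) = real (n * (x * y + y * z + x * z))"
    using assms by (simp add: field_simps)
  then show ?thesis
    by (simp only: of_nat_eq_iff)
qed

locale gcd_triple_decomposition =
  fixes x y z d a b c x0 y0 z0 :: nat
  assumes positive: "0 < x" "0 < y" "0 < z"
    and d_def: "d = gcd (gcd x y) z"
    and a_def: "a = gcd x y div d" and b_def: "b = gcd x z div d" and c_def: "c = gcd y z div d"
    and x_eq: "x = x0 * a * b * d" and y_eq: "y = y0 * a * c * d" and z_eq: "z = z0 * b * c * d"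
begin

lemma gcd_eqs: "gcd x y = a * d" "gcd x z = b * d" "gcd y z = c * d"
proof -
  have "d dvd gcd x y" "d dvd gcd x z" "d dvd gcd y z"
    unfolding d_def by (auto intro: dvd_trans[OF gcd_dvd1] dvd_trans[OF gcd_dvd2])
  then show "gcd x y = a * d" "gcd x z = b * d" "gcd y z = c * d"
    unfolding a_def b_def c_def by simp_all
qed

lemma factors_positive: "0 < a" "0 < b" "0 < c" "0 < d"
  using gcd_eqs positive by (metis gcd_pos_nat mult_is_0 neq0_conv)+

lemma coprime_cofactors:
  "coprime (x0 * b) (y0 * c)" "coprime (x0 * a) (z0 * c)" "coprime (y0 * a) (z0 * b)"
proof -
  have "gcd ((a * d) * (x0 * b)) ((a * d) * (y0 * c)) = a * d"
    using gcd_eqs(1) unfolding x_eq y_eq by (simp add: ac_simps)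
  then show "coprime (x0 * b) (y0 * c)"
    by (rule coprime_if_gcd_mult_eq) (simp add: factors_positive)
  have "gcd ((b * d) * (x0 * a)) ((b * d) * (z0 * c)) = b * d"
    using gcd_eqs(2) unfolding x_eq z_eq by (simp add: ac_simps)
  then show "coprime (x0 * a) (z0 * c)"
    by (rule coprime_if_gcd_mult_eq) (simp add: factors_positive)
  have "gcd ((c * d) * (y0 * a)) ((c * d) * (z0 * b)) = c * d"
    using gcd_eqs(3) unfolding y_eq z_eq by (simp add: ac_simps)
  then show "coprime (y0 * a) (z0 * b)"
    by (rule coprime_if_gcd_mult_eq) (simp add: factors_positive)
qed

end

locale erdos_straus_solution = gcd_triple_decomposition +
  fixes p :: nat
  assumes prime: "prime p"
    and erdos_straus: "4 / real p = 1 / real x + 1 / real y + 1 / real z"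
begin

lemma reduced_equation:
  "4 * x0 * y0 * z0 * a * b * c * d = p * (x0 * y0 * a + y0 * z0 * c + x0 * z0 * b)"
proof -
  have "4 * x * y * z = p * (x * y + y * z + x * z)"
    using unit_fractions_eq_iff[of p x y z 4] erdos_straus positive prime_gt_0_nat[OF prime]
    by simp
  then have "(a * b * c * d * d) * (4 * x0 * y0 * z0 * a * b * c * d)
      = (a * b * c * d * d) * (p * (x0 * y0 * a + y0 * z0 * c + x0 * z0 * b))"
    unfolding x_eq y_eq z_eq by (simp add: algebra_simps)
  then show ?thesis
    using factors_positive by simp
qed

lemma cofactor_cases: "x0 = 1 \<or> x0 = p" "y0 = 1 \<or> y0 = p" "z0 = 1 \<or> z0 = p"
proof -
  have "p * (x0 * (y0 * a + z0 * b) + y0 * z0 * c) = x0 * (4 * y0 * z0 * a * b * c * d)"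
    using reduced_equation by (simp add: algebra_simps)
  moreover have "coprime x0 (y0 * z0 * c)"
    using coprime_cofactors(1,2) by simp
  ultimately show "x0 = 1 \<or> x0 = p"
    using prime eq_1_or_prime_if_dvd_prime_mult by blast
  have "p * (y0 * (x0 * a + z0 * c) + x0 * z0 * b) = y0 * (4 * x0 * z0 * a * b * c * d)"
    using reduced_equation by (simp add: algebra_simps)
  moreover have "coprime y0 (x0 * z0 * b)"
    using coprime_cofactors(1,3) by (simp add: ac_simps)
  ultimately show "y0 = 1 \<or> y0 = p"
    using prime eq_1_or_prime_if_dvd_prime_mult by blast
  have "p * (z0 * (y0 * c + x0 * b) + x0 * y0 * a) = z0 * (4 * x0 * y0 * a * b * c * d)"
    using reduced_equation by (simp add: algebra_simps)
  moreover have "coprime z0 (x0 * y0 * a)"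
    using coprime_cofactors(2,3) by (simp add: ac_simps)
  ultimately show "z0 = 1 \<or> z0 = p"
    using prime eq_1_or_prime_if_dvd_prime_mult by blast
qed

lemma factors_dvd: "x0 dvd x" "a dvd x" "b dvd x" "d dvd x" "c dvd y" "y0 dvd y" "z0 dvd z"
  unfolding x_eq y_eq z_eq by simp_all

lemma type_I:
  assumes "\<not> p dvd x" and "\<not> p dvd y" and "p dvd z"
  shows "x0 = 1 \<and> y0 = 1 \<and> z0 = p"
proof (intro conjI)
  show "x0 = 1" "y0 = 1"
    using cofactor_cases(1,2) factors_dvd assms(1,2) by auto
  have "\<not> p dvd b * c * d"
    using assms(1,2) factors_dvd prime by (simp add: prime_dvd_mult_iff) (meson dvd_trans)
  then show "z0 = p"
    using cofactor_cases(3) assms(3) z_eq by auto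
qed

lemma prime_dvd_c_if_type_II:
  assumes "\<not> p dvd x" and "p dvd y" and "p dvd z"
  shows "p dvd c"
proof (rule ccontr)
  assume "\<not> p dvd c"
  moreover have "\<not> p dvd a" "\<not> p dvd b" "\<not> p dvd d"
    using assms(1) factors_dvd by (meson dvd_trans)+
  ultimately have "p dvd y0" "p dvd z0"
    using assms(2,3) prime unfolding y_eq z_eq by (auto simp: prime_dvd_mult_iff)
  moreover have "coprime y0 z0"
    using coprime_cofactors(3) by simp
  ultimately show False
    using prime by (metis coprime_common_divisor not_prime_unit)
qed

lemma type_II:
  assumes "\<not> p dvd x" and "p dvd y" and "p dvd z"
  shows "x0 = 1 \<and> y0 = 1 \<and> z0 = 1"
proof -
  have x0: "x0 = 1"
    using cofactor_cases(1) factors_dvd assms(1) by auto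
  have not_dvd: "\<not> p dvd a" "\<not> p dvd b"
    using assms(1) factors_dvd by (meson dvd_trans)+
  have p_gt_1: "1 < p"
    using prime prime_gt_1_nat by blast
  have not_both_p: "\<not> (y0 = p \<and> z0 = p)"
    using coprime_cofactors(3) p_gt_1 by auto
  obtain c' where c': "c = p * c'"
    using prime_dvd_c_if_type_II[OF assms] ..
  have equation: "4 * y0 * z0 * a * b * c * d = p * (y0 * a + y0 * z0 * c + z0 * b)"
    using reduced_equation x0 by simp
  have "y0 \<noteq> p"
  proof
    assume "y0 = p"
    then have "z0 = 1" using cofactor_cases(3) not_both_p by auto
    with \<open>y0 = p\<close> have "p * (4 * a * b * c * d) = p * (p * (a + c) + b)"
      using equation by (simp add: algebra_simps)
    then have "p * (a + c) + b = 4 * a * b * c * d"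
      using p_gt_1 by simp
    also have "\<dots> = p * (4 * a * b * c' * d)"
      unfolding c' by (simp add: ac_simps)
    finally have "p dvd b"
      by (metis dvd_add_times_triv_left_iff dvd_triv_left mult.commute)
    then show False using not_dvd by simp
  qed
  moreover have "z0 \<noteq> p"
  proof
    assume "z0 = p"
    then have "y0 = 1" using cofactor_cases(2) not_both_p by auto
    with \<open>z0 = p\<close> have "p * (4 * a * b * c * d) = p * (p * (c + b) + a)"
      using equation by (simp add: algebra_simps)
    then have "p * (c + b) + a = 4 * a * b * c * d"
      using p_gt_1 by simp
    also have "\<dots> = p * (4 * a * b * c' * d)"
      unfolding c' by (simp add: ac_simps)
    finally have "p dvd a"
      by (metis dvd_add_times_triv_left_iff dvd_triv_left mult.commute)
    then show False using not_dvd by simp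
  qed
  ultimately show ?thesis
    using x0 cofactor_cases(2,3) by auto
qed

end

theorem lemma5:
  fixes p x y z d a b c x0 y0 z0 :: nat
  assumes "prime p"
    and "0 < x" and "x \<le> y" and "y \<le> z"
    and "4 / real p = 1 / real x + 1 / real y + 1 / real z"
    and "d = gcd (gcd x y) z"
    and "a = gcd x y div d" and "b = gcd x z div d" and "c = gcd y z div d"
    and "x = x0 * a * b * d" and "y = y0 * a * c * d" and "z = z0 * b * c * d"
  shows "(gcd x p = 1 \<and> gcd y p = 1 \<and> gcd z p = p \<longrightarrow> x0 = 1 \<and> y0 = 1 \<and> z0 = p)
       \<and> (gcd x p = 1 \<and> gcd y p = p \<and> gcd z p = p \<longrightarrow> x0 = 1 \<and> y0 = 1 \<and> z0 = 1)"
proof -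
  interpret erdos_straus_solution x y z d a b c x0 y0 z0 p
    by unfold_locales (use assms in \<open>assumption | linarith\<close>)+
  show ?thesis
    unfolding gcd_prime_eq_1_iff[OF prime] gcd_nat.absorb_iff2[symmetric]
    using type_I type_II by blast
qed

end
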